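(* There is an infinite family of directed graphs (with unit arc lengths) such that, with $n$ the number of vertices, the distance greedy algorithm d-HHL finds a hierarchical hub labeling of size $\Omega(n^{3/2})$ while the optimal hierarchical hub labeling has size $O(n)$.
   Context: For a directed graph $G=(V,E)$, $n=|V|$, a hub labeling assigns forward and backward labels $L_f(v),L_b(v)\subseteq V$ such that for every ordered pair $(u,w)$ with $w$ reachable from $u$, $L_f(u)\cap L_b(w)$ contains a vertex on a shortest $u$–$w$ path; its size is $\sum_v(|L_f(v)|+|L_b(v)|)$. It is hierarchical (HHL) if there is a bijection $\pi:V\to\{1,\dots,n\}$ with $u\in L_f(v)\cup L_b(v)\Rightarrow\pi(u)\le\pi(v)$. d-HHL: start with empty labels; $U$ is the set of uncovered pairs. Each pair gets weight $W(u,w)=0$ if $\mathrm{dist}(u,w)=0$ and $n^{2\lfloor\log_2\mathrm{dist}(u,w)\rfloor}$ otherwise. For each not-yet-selected vertex $v$, the center graph is the bipartite graph with two copies $X,Y$ of $V$ and an arc $(u,w)$ of weight $W(u,w)$ for each $(u,w)\in U$ having a shortest $u$–$w$ path through $v$. Each iteration selects a not-yet-selected $v$ whose center graph has the largest total arc weight and adds $v$ to $L_f(u)$ for all non-isolated $u\in X$ and to $L_b(w)$ for all non-isolated $w\in Y$, until all pairs are covered. *)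

theory Defs
  imports Complex_Main
begin

text \<open>A graph is a finite vertex set V with an arc relation E \<subseteq> V \<times> V.
  Every arc has length 1, so the distance is the least number of arcs.\<close>

definition reach :: "('a \<times> 'a) set \<Rightarrow> 'a \<Rightarrow> 'a \<Rightarrow> bool" where
  "reach E u w \<longleftrightarrow> (u, w) \<in> E\<^sup>*"

definition gdist :: "('a \<times> 'a) set \<Rightarrow> 'a \<Rightarrow> 'a \<Rightarrow> nat" where
  "gdist E u w = (LEAST k. (u, w) \<in> E ^^ k)"

definition on_sp :: "('a \<times> 'a) set \<Rightarrow> 'a \<Rightarrow> 'a \<Rightarrow> 'a \<Rightarrow> bool" where
  "on_sp E u v w \<longleftrightarrow> reach E u v \<and> reach E v w \<and> gdist E u v + gdist E v w = gdist E u w"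

definition covers :: "('a \<times> 'a) set \<Rightarrow> ('a \<Rightarrow> 'a set) \<Rightarrow> ('a \<Rightarrow> 'a set) \<Rightarrow> 'a \<Rightarrow> 'a \<Rightarrow> bool" where
  "covers E Lf Lb u w \<longleftrightarrow> (\<exists>v \<in> Lf u \<inter> Lb w. on_sp E u v w)"

definition is_hub_labeling :: "'a set \<Rightarrow> ('a \<times> 'a) set \<Rightarrow> ('a \<Rightarrow> 'a set) \<Rightarrow> ('a \<Rightarrow> 'a set) \<Rightarrow> bool" where
  "is_hub_labeling V E Lf Lb \<longleftrightarrow>
     (\<forall>v \<in> V. Lf v \<subseteq> V \<and> Lb v \<subseteq> V) \<and>
     (\<forall>u \<in> V. \<forall>w \<in> V. reach E u w \<longrightarrow> covers E Lf Lb u w)"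

definition hl_size :: "'a set \<Rightarrow> ('a \<Rightarrow> 'a set) \<Rightarrow> ('a \<Rightarrow> 'a set) \<Rightarrow> nat" where
  "hl_size V Lf Lb = (\<Sum>v\<in>V. card (Lf v) + card (Lb v))"

definition is_hierarchical :: "'a set \<Rightarrow> ('a \<Rightarrow> 'a set) \<Rightarrow> ('a \<Rightarrow> 'a set) \<Rightarrow> bool" where
  "is_hierarchical V Lf Lb \<longleftrightarrow>
     (\<exists>\<pi>. bij_betw \<pi> V {1..card V} \<and> (\<forall>v \<in> V. \<forall>u \<in> Lf v \<union> Lb v. \<pi> u \<le> \<pi> v))"

definition is_HHL :: "'a set \<Rightarrow> ('a \<times> 'a) set \<Rightarrow> ('a \<Rightarrow> 'a set) \<Rightarrow> ('a \<Rightarrow> 'a set) \<Rightarrow> bool" where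
  "is_HHL V E Lf Lb \<longleftrightarrow> is_hub_labeling V E Lf Lb \<and> is_hierarchical V Lf Lb"

definition uncovered :: "'a set \<Rightarrow> ('a \<times> 'a) set \<Rightarrow> ('a \<Rightarrow> 'a set) \<Rightarrow> ('a \<Rightarrow> 'a set) \<Rightarrow> ('a \<times> 'a) set" where
  "uncovered V E Lf Lb = {(u, w). u \<in> V \<and> w \<in> V \<and> reach E u w \<and> \<not> covers E Lf Lb u w}"

definition pweight :: "'a set \<Rightarrow> ('a \<times> 'a) set \<Rightarrow> 'a \<Rightarrow> 'a \<Rightarrow> nat" where
  "pweight V E u w = (if gdist E u w = 0 then 0
                      else card V ^ (2 * nat \<lfloor>log 2 (real (gdist E u w))\<rfloor>))"

definition center_arcs :: "'a set \<Rightarrow> ('a \<times> 'a) set \<Rightarrow> ('a \<Rightarrow> 'a set) \<Rightarrow> ('a \<Rightarrow> 'a set) \<Rightarrow> 'a \<Rightarrow> ('a \<times> 'a) set" where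
  "center_arcs V E Lf Lb v = {(u, w) \<in> uncovered V E Lf Lb. on_sp E u v w}"

definition center_weight :: "'a set \<Rightarrow> ('a \<times> 'a) set \<Rightarrow> ('a \<Rightarrow> 'a set) \<Rightarrow> ('a \<Rightarrow> 'a set) \<Rightarrow> 'a \<Rightarrow> nat" where
  "center_weight V E Lf Lb v = (\<Sum>(u, w) \<in> center_arcs V E Lf Lb v. pweight V E u w)"

definition dstep :: "'a set \<Rightarrow> ('a \<times> 'a) set \<Rightarrow> 'a \<Rightarrow> ('a \<Rightarrow> 'a set) \<times> ('a \<Rightarrow> 'a set)
                      \<Rightarrow> ('a \<Rightarrow> 'a set) \<times> ('a \<Rightarrow> 'a set)" where
  "dstep V E v L = (let A = center_arcs V E (fst L) (snd L) v in
      (\<lambda>x. fst L x \<union> (if (\<exists>w. (x, w) \<in> A) then {v} else {}),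
       \<lambda>x. snd L x \<union> (if (\<exists>u. (u, x) \<in> A) then {v} else {})))"

definition labels_after :: "'a set \<Rightarrow> ('a \<times> 'a) set \<Rightarrow> 'a list \<Rightarrow> ('a \<Rightarrow> 'a set) \<times> ('a \<Rightarrow> 'a set)" where
  "labels_after V E vs = fold (dstep V E) vs (\<lambda>_. {}, \<lambda>_. {})"

text \<open>vs is a complete execution of d-HHL (any tie-breaking): the i-th selected vertex is
  not yet selected and maximizes the center-graph weight among non-selected vertices,
  each iteration starts with uncovered pairs, and at the end all pairs are covered.\<close>
definition dHHL_run :: "'a set \<Rightarrow> ('a \<times> 'a) set \<Rightarrow> 'a list \<Rightarrow> bool" where
  "dHHL_run V E vs \<longleftrightarrow> distinct vs \<and> set vs \<subseteq> V \<and>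
     (\<forall>i < length vs.
        let L = labels_after V E (take i vs) in
        uncovered V E (fst L) (snd L) \<noteq> {} \<and>
        (\<forall>x \<in> V - set (take i vs).
            center_weight V E (fst L) (snd L) x \<le> center_weight V E (fst L) (snd L) (vs ! i))) \<and>
     (let L = labels_after V E vs in uncovered V E (fst L) (snd L) = {})"

end

theory Submission
  imports Defs
begin

text \<open>
  Take a hub 0 with arcs to K disjoint paths 5j+5 \<rightarrow> ... \<rightarrow> 5j+1 of four arcs each, and
  K^2 sources with an arc into the hub, so n = K^2 + 5K + 1.
  The two ends of a path are at distance 4, a pair of weight n^4, whereas every pair
  through a vertex off the paths has distance at most 2 and weight at most n^2, and there
  are fewer than n^2 such pairs. So d-HHL selects only path vertices until every path
  carries a hub. When the first vertex y of a path is selected, no hub lies yet on the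
  shortest path u \<rightarrow> 0 \<rightarrow> y from any source u, so y enters the forward label of all
  K^2 sources: the labeling has size at least K^3, which is of order n^(3/2).
  Ranking vertices by their number instead, the labels L_f(u) = {u, 0} for sources,
  the segment of its path ending at y for a path vertex y, and L_b(y) = {y, 0}, form an
  HHL of size at most 7n.
\<close>

lemma gdist_self: "gdist E x x = 0"
  unfolding gdist_def by (rule Least_eq_0) simp

lemma gdist_le_relpow: "(x, y) \<in> E ^^ k \<Longrightarrow> gdist E x y \<le> k"
  unfolding gdist_def by (rule Least_le)

lemma relpow_gdist: "reach E x y \<Longrightarrow> (x, y) \<in> E ^^ gdist E x y"
  unfolding gdist_def reach_def by (rule LeastI_ex) (meson rtrancl_power)

lemma reach_if_relpow: "(x, y) \<in> E ^^ k \<Longrightarrow> reach E x y"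
  unfolding reach_def by (rule relpow_imp_rtrancl)

lemma gdist_eqI:
  assumes "(x, y) \<in> E ^^ k" and "\<And>m. (x, y) \<in> E ^^ m \<Longrightarrow> k \<le> m"
  shows "gdist E x y = k"
  using gdist_le_relpow[OF assms(1)] assms(2)[OF relpow_gdist[OF reach_if_relpow[OF assms(1)]]]
  by simp

lemma gdist_eq_0D: "reach E x y \<Longrightarrow> gdist E x y = 0 \<Longrightarrow> x = y"
  using relpow_gdist by fastforce

lemma gdist_arc: "(x, y) \<in> E \<Longrightarrow> x \<noteq> y \<Longrightarrow> gdist E x y = 1"
  by (rule gdist_eqI) (auto simp: Suc_le_eq gr0_conv_Suc elim: relpow_E)

lemma on_sp_source: "reach E u w \<Longrightarrow> on_sp E u u w"
  by (simp add: on_sp_def reach_def gdist_self)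

lemma on_sp_target: "reach E u w \<Longrightarrow> on_sp E u w w"
  by (simp add: on_sp_def reach_def gdist_self)

lemma pweight_le_if_gdist_le_2:
  assumes "gdist E s t \<le> 2" and "finite V" and "V \<noteq> {}"
  shows "pweight V E s t \<le> card V ^ 2"
proof -
  have "1 \<le> card V" using assms(2,3) by (simp add: Suc_le_eq card_gt_0_iff)
  then show ?thesis
    using assms(1) by (cases "gdist E s t") (auto simp: pweight_def le_Suc_eq)
qed

lemma pweight_if_gdist_4:
  assumes "gdist E s t = 4"
  shows "pweight V E s t = card V ^ 4"
proof -
  have "log 2 (4::real) = 2"
    using log_pow_cancel[of "2::real" 2] by simp
  with assms show ?thesis by (simp add: pweight_def)
qed

lemma labels_after_snoc: "labels_after V E (xs @ [v]) = dstep V E v (labels_after V E xs)"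
  by (simp add: labels_after_def)

lemma fst_labels_after_subset: "fst (labels_after V E xs) x \<subseteq> set xs"
  by (induction xs arbitrary: x rule: rev_induct)
    (auto simp: labels_after_def dstep_def Let_def)

lemma fst_labels_after_mono:
  "fst (labels_after V E xs) x \<subseteq> fst (labels_after V E (xs @ ys)) x"
proof (induction ys rule: rev_induct)
  case (snoc y ys)
  then show ?case
    unfolding append_assoc[symmetric] labels_after_snoc by (auto simp: dstep_def Let_def)
qed simp

lemma dstep_adds_center:
  "(x, w) \<in> center_arcs V E (fst L) (snd L) v \<Longrightarrow> v \<in> fst (dstep V E v L) x"
  by (auto simp: dstep_def Let_def)

lemma dHHL_run_selects_max:
  assumes "dHHL_run V E vs" and "i < length vs" and "x \<in> V - set (take i vs)"
  defines "L \<equiv> labels_after V E (take i vs)"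
  shows "center_weight V E (fst L) (snd L) x \<le> center_weight V E (fst L) (snd L) (vs ! i)"
  using assms unfolding dHHL_run_def Let_def by blast

lemma dHHL_run_covers:
  assumes "dHHL_run V E vs" and "u \<in> V" and "w \<in> V" and "reach E u w"
  shows "covers E (fst (labels_after V E vs)) (snd (labels_after V E vs)) u w"
  using assms unfolding dHHL_run_def Let_def uncovered_def by blast

subsection \<open>The graph family\<close>

lemma pred_div_eq: "(t::nat) mod m \<noteq> 0 \<Longrightarrow> (t - 1) div m = t div m"
  by (cases t) (auto simp: div_Suc)

lemma pred_mod_eq: "(t::nat) mod m \<noteq> 0 \<Longrightarrow> (t - 1) mod m = t mod m - 1"
  by (cases t) (auto simp: mod_Suc)

definition paths :: "nat \<Rightarrow> nat set" where
  "paths K = {1..5*K}"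

definition sources :: "nat \<Rightarrow> nat set" where
  "sources K = {5*K+1..5*K+K*K}"

definition verts :: "nat \<Rightarrow> nat set" where
  "verts K = {0..5*K+K*K}"

definition arcs :: "nat \<Rightarrow> (nat \<times> nat) set" where
  "arcs K = {(u, 0) |u. u \<in> sources K} \<union> {(0, y) |y. y \<in> paths K}
     \<union> {(y, y - 1) |y. y \<in> paths K \<and> (y - 1) mod 5 \<noteq> 0}"

definition path_index :: "nat \<Rightarrow> nat" where
  "path_index y = (y - 1) div 5"

definition path_verts :: "nat \<Rightarrow> nat \<Rightarrow> nat set" where
  "path_verts K j = {y \<in> paths K. path_index y = j}"

text \<open>Every arc increases the depth by at most one, so depths bound distances from below.\<close>
definition depth :: "nat \<Rightarrow> nat \<Rightarrow> nat" where
  "depth K x = (if x = 0 then 3 else if x \<in> paths K then 4 - (x - 1) mod 5 else 2)"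

lemma card_verts: "card (verts K) = K*K + 5*K + 1"
  by (simp add: verts_def)

lemma card_paths: "card (paths K) = 5*K"
  by (simp add: paths_def)

lemma card_sources: "card (sources K) = K*K"
  by (simp add: sources_def)

lemma paths_subset_verts: "paths K \<subseteq> verts K"
  by (auto simp: paths_def verts_def)

lemma sources_subset_verts: "sources K \<subseteq> verts K"
  by (auto simp: sources_def verts_def)

lemma verts_cases: "x \<in> verts K \<Longrightarrow> x = 0 \<or> x \<in> paths K \<or> x \<in> sources K"
  by (auto simp: verts_def paths_def sources_def)

lemma source_not_path: "u \<in> sources K \<Longrightarrow> u \<notin> paths K \<and> u \<noteq> 0"
  by (auto simp: sources_def paths_def)

lemma zero_not_path: "0 \<notin> paths K"
  by (simp add: paths_def)

lemma arcs_iff: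
  "(a, b) \<in> arcs K \<longleftrightarrow> (a \<in> sources K \<and> b = 0) \<or> (a = 0 \<and> b \<in> paths K)
     \<or> (a \<in> paths K \<and> (a - 1) mod 5 \<noteq> 0 \<and> b = a - 1)"
  by (auto simp: arcs_def)

lemma arcs_subset_verts: "arcs K \<subseteq> verts K \<times> verts K"
  by (auto simp: arcs_def sources_def paths_def verts_def)

lemma arc_from_path:
  assumes "(a, b) \<in> arcs K" and "a \<in> paths K"
  shows "b = a - 1 \<and> b \<in> paths K \<and> path_index b = path_index a"
proof -
  have pred: "(a - 1) mod 5 \<noteq> 0" and b: "b = a - 1"
    using assms source_not_path zero_not_path unfolding arcs_iff by auto
  then have "a - 1 \<noteq> 0" by auto
  with assms(2) pred_div_eq[OF pred] show ?thesis
    unfolding b path_index_def paths_def by auto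
qed

lemma reach_from_path:
  "(a, b) \<in> (arcs K)\<^sup>* \<Longrightarrow> a \<in> paths K \<Longrightarrow> b \<in> paths K \<and> path_index b = path_index a \<and> b \<le> a"
  by (induction rule: rtrancl_induct) (auto dest: arc_from_path)

lemma arc_target: "(a, b) \<in> arcs K \<Longrightarrow> b = 0 \<or> b \<in> paths K"
  using arc_from_path unfolding arcs_iff by blast

lemma reach_cases: "(a, b) \<in> (arcs K)\<^sup>* \<Longrightarrow> b = a \<or> b = 0 \<or> b \<in> paths K"
  by (induction rule: rtrancl_induct) (auto dest: arc_target)

lemma depth_arc: "(a, b) \<in> arcs K \<Longrightarrow> depth K b \<le> depth K a + 1"
proof -
  assume ab: "(a, b) \<in> arcs K"
  show ?thesis
  proof (cases "a \<in> paths K")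
    case True
    then have "b = a - 1" "b \<in> paths K" "(a - 1) mod 5 \<noteq> 0"
      using ab arc_from_path source_not_path zero_not_path unfolding arcs_iff by blast+
    then show ?thesis
      using True pred_mod_eq[of "a - 1" 5] zero_not_path by (auto simp: depth_def) arith
  next
    case False
    then show ?thesis
      using ab source_not_path zero_not_path unfolding arcs_iff by (auto simp: depth_def)
  qed
qed

lemma source_path_relpow: "u \<in> sources K \<Longrightarrow> y \<in> paths K \<Longrightarrow> (u, y) \<in> arcs K ^^ 2"
  by (auto simp: arcs_iff numeral_2_eq_2 intro: relcompI)

lemma depth_relpow: "(a, b) \<in> arcs K ^^ k \<Longrightarrow> depth K b \<le> depth K a + k"
proof (induction k arbitrary: b)
  case (Suc k)
  then obtain z where "(a, z) \<in> arcs K ^^ k" and "(z, b) \<in> arcs K" by auto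
  with Suc.IH depth_arc show ?case by fastforce
qed simp

lemma powr_three_halves_square: "(x::real) > 0 \<Longrightarrow> (x ^ 2) powr (3/2) = x ^ 3"
proof -
  assume x: "x > 0"
  have "(x ^ 2) powr (3/2) = (x powr 2) powr (3/2)" using x by (simp add: powr_realpow)
  also have "\<dots> = x powr 3" by (simp add: powr_powr)
  also have "\<dots> = x ^ 3" using x by (simp add: powr_realpow)
  finally show ?thesis .
qed

lemma card_verts_powr_le:
  assumes "K \<ge> 1"
  shows "real (card (verts K)) powr (3/2) \<le> 27 * real K ^ 3"
proof -
  have "K \<le> K*K" using assms by simp
  then have "card (verts K) \<le> 9*(K*K)" using assms unfolding card_verts by linarith
  then have "real (card (verts K)) \<le> real (9*(K*K))" by (simp only: of_nat_le_iff)
  also have "\<dots> = (3 * real K) ^ 2" by (simp add: power2_eq_square)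
  finally have "real (card (verts K)) powr (3/2) \<le> ((3 * real K) ^ 2) powr (3/2)"
    by (intro powr_mono2) auto
  also have "\<dots> = (3 * real K) ^ 3"
    using assms by (intro powr_three_halves_square) simp
  also have "\<dots> = 27 * real K ^ 3" by (simp add: power_mult_distrib)
  finally show ?thesis .
qed

locale path_family =
  fixes K :: nat
  assumes K_pos: "K \<ge> 1"
begin

lemma path_ends_in_path: "j < K \<Longrightarrow> 5 + 5*j \<in> path_verts K j \<and> 1 + 5*j \<in> path_verts K j"
  by (auto simp: path_verts_def paths_def path_index_def)

lemma path_ends_relpow: "j < K \<Longrightarrow> (5 + 5*j, 1 + 5*j) \<in> arcs K ^^ 4"
proof -
  assume j: "j < K"
  have "(x + 5*j, x - 1 + 5*j) \<in> arcs K" if "x \<in> {2, 3, 4, 5}" for x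
    using that j unfolding arcs_iff paths_def by (auto simp: mod_Suc)
  from this[of 5] this[of 4] this[of 3] this[of 2]
  have "(5 + 5*j, 1 + 5*j) \<in> arcs K ^^ Suc (Suc (Suc (Suc 0)))"
    by simp (meson relcompI)
  then show ?thesis by (simp add: numeral_eq_Suc)
qed

lemma reach_path_ends: "j < K \<Longrightarrow> reach (arcs K) (5 + 5*j) (1 + 5*j)"
  by (rule reach_if_relpow[OF path_ends_relpow])

lemma gdist_path_ends: "j < K \<Longrightarrow> gdist (arcs K) (5 + 5*j) (1 + 5*j) = 4"
proof (rule gdist_eqI)
  assume j: "j < K"
  show "(5 + 5*j, 1 + 5*j) \<in> arcs K ^^ 4" using path_ends_relpow[OF j] .
  have "depth K (5 + 5*j) = 0" and "depth K (1 + 5*j) = 4"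
    using path_ends_in_path[OF j] by (auto simp: depth_def path_verts_def)
  then show "4 \<le> m" if "(5 + 5*j, 1 + 5*j) \<in> arcs K ^^ m" for m
    using depth_relpow[OF that] by simp
qed

lemma hub_on_path_ends: "j < K \<Longrightarrow> on_sp (arcs K) (5 + 5*j) v (1 + 5*j) \<Longrightarrow> v \<in> path_verts K j"
  using reach_from_path[of "5 + 5*j" v K] path_ends_in_path[of j]
  by (auto simp: on_sp_def reach_def path_verts_def)

lemma gdist_source_path:
  assumes u: "u \<in> sources K" and y: "y \<in> paths K"
  shows "gdist (arcs K) u y = 2"
proof (rule gdist_eqI)
  show "(u, y) \<in> arcs K ^^ 2" using u y by (rule source_path_relpow)
  have "u \<noteq> y" and "(u, y) \<notin> arcs K"
    using u y by (auto simp: arcs_iff paths_def sources_def)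
  then show "2 \<le> m" if "(u, y) \<in> arcs K ^^ m" for m
    using that by (cases m; cases "m - 1") auto
qed

lemma gdist_le_2_off_paths:
  assumes st: "reach (arcs K) s t" and s: "s \<notin> paths K"
  shows "gdist (arcs K) s t \<le> 2"
proof (cases "t = s")
  case False
  have "(s, t) \<in> (arcs K)\<^sup>*" using st by (simp add: reach_def)
  with False obtain z where z: "(s, z) \<in> arcs K"
    by (metis converse_rtranclE)
  have t: "t = 0 \<or> t \<in> paths K"
    using reach_cases \<open>(s, t) \<in> (arcs K)\<^sup>*\<close> False by blast
  show ?thesis
  proof (cases "s = 0")
    case True
    then show ?thesis using t False gdist_arc[of 0 t] by (auto simp: arcs_iff)
  next
    case False
    then have "s \<in> sources K" using z s by (auto simp: arcs_iff)
    then show ?thesis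
      using t gdist_arc[of s 0] gdist_source_path source_not_path by (auto simp: arcs_iff)
  qed
qed (simp add: gdist_self)

lemma on_sp_source_path:
  assumes u: "u \<in> sources K" and y: "y \<in> paths K" and sp: "on_sp (arcs K) u v y"
  shows "v = u \<or> v = 0 \<or> v = y"
proof (rule ccontr)
  assume other: "\<not> ?thesis"
  have uv: "reach (arcs K) u v" and vy: "reach (arcs K) v y"
    and sum: "gdist (arcs K) u v + gdist (arcs K) v y = gdist (arcs K) u y"
    using sp by (auto simp: on_sp_def)
  have "v \<in> paths K" using reach_cases uv other by (auto simp: reach_def)
  then have "gdist (arcs K) u v = 2" using gdist_source_path[OF u] by simp
  moreover have "gdist (arcs K) v y \<noteq> 0" using gdist_eq_0D[OF vy] other by auto
  ultimately show False using sum gdist_source_path[OF u y] by linarith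
qed

lemma center_weight_off_paths:
  assumes x: "x \<in> verts K" "x \<notin> paths K"
  shows "center_weight (verts K) (arcs K) Lf Lb x < card (verts K) ^ 4"
proof -
  let ?V = "verts K" and ?n = "card (verts K)"
  let ?A = "center_arcs ?V (arcs K) Lf Lb x"
  have sub: "?A \<subseteq> (?V - paths K) \<times> ?V"
  proof (rule subrelI)
    fix s t assume "(s, t) \<in> ?A"
    then have "s \<in> ?V" "t \<in> ?V" "on_sp (arcs K) s x t"
      by (auto simp: center_arcs_def uncovered_def)
    moreover have "s \<notin> paths K"
      using reach_from_path[of s x] calculation(3) x(2) by (auto simp: on_sp_def reach_def)
    ultimately show "(s, t) \<in> (?V - paths K) \<times> ?V" by auto
  qed
  have fin: "finite ?V" by (simp add: verts_def)
  have "center_weight ?V (arcs K) Lf Lb x \<le> (\<Sum>p\<in>?A. ?n^2)"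
    unfolding center_weight_def
  proof (rule sum_mono, clarify)
    fix s t assume st: "(s, t) \<in> ?A"
    then have "gdist (arcs K) s t \<le> 2"
      using sub gdist_le_2_off_paths by (auto simp: center_arcs_def uncovered_def)
    then show "pweight ?V (arcs K) s t \<le> ?n^2"
      using fin by (intro pweight_le_if_gdist_le_2) (auto simp: verts_def)
  qed
  also have "\<dots> = card ?A * ?n^2" by simp
  also have "\<dots> \<le> card ((?V - paths K) \<times> ?V) * ?n^2"
    using sub fin by (intro mult_right_mono card_mono) auto
  also have "card ((?V - paths K) \<times> ?V) = (?n - 5*K) * ?n"
    using fin paths_subset_verts[of K]
    by (simp add: card_cartesian_product card_Diff_subset finite_subset card_paths)
  also have "(?n - 5*K) * ?n * ?n^2 < ?n * ?n * ?n^2"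
    using K_pos by (intro mult_strict_right_mono) (auto simp: card_verts)
  finally show ?thesis by (simp add: power_def)
qed

lemma center_weight_path_top:
  assumes j: "j < K" and unc: "(5 + 5*j, 1 + 5*j) \<in> uncovered (verts K) (arcs K) Lf Lb"
  shows "card (verts K) ^ 4 \<le> center_weight (verts K) (arcs K) Lf Lb (5 + 5*j)"
proof -
  let ?A = "center_arcs (verts K) (arcs K) Lf Lb (5 + 5*j)"
  have mem: "(5 + 5*j, 1 + 5*j) \<in> ?A"
    using unc on_sp_source[OF reach_path_ends[OF j]] by (simp add: center_arcs_def)
  have "?A \<subseteq> verts K \<times> verts K" by (auto simp: center_arcs_def uncovered_def)
  then have "finite ?A" by (rule finite_subset) (simp add: verts_def)
  from member_le_sum[OF mem _ this, of "\<lambda>(a, b). pweight (verts K) (arcs K) a b"]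
    pweight_if_gdist_4[OF gdist_path_ends[OF j]]
  show ?thesis
    by (simp add: center_weight_def)
qed

lemma uncovered_path_ends:
  assumes j: "j < K" and labels: "\<And>x. Lf x \<subseteq> S" and S: "S \<inter> path_verts K j = {}"
  shows "(5 + 5*j, 1 + 5*j) \<in> uncovered (verts K) (arcs K) Lf Lb"
  using reach_path_ends[OF j] path_ends_in_path[OF j] hub_on_path_ends[OF j] labels S
    paths_subset_verts
  by (fastforce simp: uncovered_def covers_def path_verts_def)

subsection \<open>Lower bound for d-HHL\<close>

context
  fixes vs :: "nat list"
  assumes run: "dHHL_run (verts K) (arcs K) vs"
begin

abbreviation prefix_labels :: "nat \<Rightarrow> (nat \<Rightarrow> nat set) \<times> (nat \<Rightarrow> nat set)" where
  "prefix_labels i \<equiv> labels_after (verts K) (arcs K) (take i vs)"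

lemma run_selects_paths_first:
  assumes "i \<le> length vs" and j: "j < K" and avoid: "set (take i vs) \<inter> path_verts K j = {}"
  shows "set (take i vs) \<subseteq> paths K"
  using assms(1) avoid
proof (induction i)
  case (Suc i)
  then have i: "i < length vs" by simp
  have prefix_Suc: "take (Suc i) vs = take i vs @ [vs ! i]"
    using i by (simp add: take_Suc_conv_app_nth)
  have avoid_i: "set (take i vs) \<inter> path_verts K j = {}"
    using Suc.prems(2) unfolding prefix_Suc by auto
  have unc: "(5 + 5*j, 1 + 5*j) \<in> uncovered (verts K) (arcs K)
      (fst (prefix_labels i)) (snd (prefix_labels i))"
    by (rule uncovered_path_ends[OF j _ avoid_i]) (simp add: fst_labels_after_subset)
  have "5 + 5*j \<in> verts K - set (take i vs)"
    using path_ends_in_path[OF j] avoid_i paths_subset_verts by (auto simp: path_verts_def)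
  from dHHL_run_selects_max[OF run i this] center_weight_path_top[OF j unc]
  have "card (verts K) ^ 4 \<le> center_weight (verts K) (arcs K)
      (fst (prefix_labels i)) (snd (prefix_labels i)) (vs ! i)"
    by linarith
  moreover have "vs ! i \<in> verts K"
    using run i by (auto simp: dHHL_run_def)
  ultimately have "vs ! i \<in> paths K"
    using center_weight_off_paths not_le by blast
  then show ?case using Suc i avoid_i unfolding prefix_Suc by auto
qed simp

lemma run_first_path_vertex:
  assumes j: "j < K"
  obtains i where "i < length vs" "vs ! i \<in> path_verts K j"
    "set (take i vs) \<inter> path_verts K j = {}"
proof -
  let ?F = "labels_after (verts K) (arcs K) vs"
  have "covers (arcs K) (fst ?F) (snd ?F) (5 + 5*j) (1 + 5*j)"
    using dHHL_run_covers[OF run _ _ reach_path_ends[OF j]] path_ends_in_path[OF j]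
      paths_subset_verts by (auto simp: path_verts_def)
  then obtain v where "v \<in> fst ?F (5 + 5*j)" "on_sp (arcs K) (5 + 5*j) v (1 + 5*j)"
    by (auto simp: covers_def)
  then have "v \<in> set vs \<inter> path_verts K j"
    using fst_labels_after_subset hub_on_path_ends[OF j] by fast
  then have "\<exists>i. i < length vs \<and> vs ! i \<in> path_verts K j"
    by (auto simp: in_set_conv_nth)
  then obtain i where i: "i < length vs \<and> vs ! i \<in> path_verts K j"
    and least: "\<forall>m<i. \<not> (m < length vs \<and> vs ! m \<in> path_verts K j)"
    by (auto simp: exists_least_iff[of "\<lambda>i. i < length vs \<and> vs ! i \<in> path_verts K j"])
  have "set (take i vs) \<inter> path_verts K j = {}"
    using least i by (auto simp: in_set_conv_nth)
  with i that show ?thesis by blast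
qed

lemma run_path_vertex_in_source_labels:
  assumes j: "j < K" and u: "u \<in> sources K"
  shows "\<exists>y \<in> path_verts K j. y \<in> fst (labels_after (verts K) (arcs K) vs) u"
proof -
  obtain i where i: "i < length vs" and y: "vs ! i \<in> path_verts K j"
    and avoid: "set (take i vs) \<inter> path_verts K j = {}"
    using run_first_path_vertex[OF j] .
  let ?y = "vs ! i" and ?L = "prefix_labels i"
  have in_paths: "set (take i vs) \<subseteq> paths K"
    using run_selects_paths_first[OF _ j avoid] i by simp
  have yP: "?y \<in> paths K" using y by (simp add: path_verts_def)
  have r: "reach (arcs K) u ?y"
    using reach_if_relpow[OF source_path_relpow[OF u yP]] .
  have "\<not> covers (arcs K) (fst ?L) (snd ?L) u ?y"
  proof
    assume "covers (arcs K) (fst ?L) (snd ?L) u ?y"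
    then obtain v where "v \<in> set (take i vs)" "on_sp (arcs K) u v ?y"
      using fst_labels_after_subset by (fastforce simp: covers_def)
    then show False
      using on_sp_source_path[OF u yP] in_paths source_not_path[OF u] zero_not_path avoid y
      by auto
  qed
  then have "(u, ?y) \<in> center_arcs (verts K) (arcs K) (fst ?L) (snd ?L) ?y"
    using r on_sp_target[OF r] u yP sources_subset_verts paths_subset_verts
    by (auto simp: center_arcs_def uncovered_def)
  then have "?y \<in> fst (labels_after (verts K) (arcs K) (take (Suc i) vs)) u"
    using dstep_adds_center i by (simp add: take_Suc_conv_app_nth labels_after_snoc)
  then have "?y \<in> fst (labels_after (verts K) (arcs K) vs) u"
    using fst_labels_after_mono[of _ _ "take (Suc i) vs" u "drop (Suc i) vs"] by auto
  with y show ?thesis by blast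
qed

lemma run_source_label_card:
  assumes u: "u \<in> sources K"
  shows "K \<le> card (fst (labels_after (verts K) (arcs K) vs) u)"
proof -
  let ?Lu = "fst (labels_after (verts K) (arcs K) vs) u"
  have "{..<K} \<subseteq> path_index ` ?Lu"
    using run_path_vertex_in_source_labels[OF _ u] by (fastforce simp: path_verts_def)
  moreover have "finite ?Lu"
    by (rule finite_subset[OF fst_labels_after_subset]) simp
  ultimately show ?thesis
    using surj_card_le by (metis card_lessThan)
qed

lemma run_size_ge:
  "K^3 \<le> hl_size (verts K) (fst (labels_after (verts K) (arcs K) vs))
                              (snd (labels_after (verts K) (arcs K) vs))"
proof -
  let ?F = "labels_after (verts K) (arcs K) vs"
  have "K^3 = (\<Sum>u\<in>sources K. K)" by (simp add: card_sources power3_eq_cube)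
  also have "\<dots> \<le> (\<Sum>u\<in>sources K. card (fst ?F u) + card (snd ?F u))"
    using run_source_label_card by (intro sum_mono) fastforce
  also have "\<dots> \<le> hl_size (verts K) (fst ?F) (snd ?F)"
    unfolding hl_size_def by (rule sum_mono2[OF _ sources_subset_verts]) (auto simp: verts_def)
  finally show ?thesis .
qed

lemma run_size_ge_powr:
  "1/27 * real (card (verts K)) powr (3/2)
     \<le> real (hl_size (verts K) (fst (labels_after (verts K) (arcs K) vs))
                                  (snd (labels_after (verts K) (arcs K) vs)))"
proof -
  have "real K ^ 3 \<le> real (hl_size (verts K) (fst (labels_after (verts K) (arcs K) vs))
                                            (snd (labels_after (verts K) (arcs K) vs)))"
    using run_size_ge unfolding of_nat_power[symmetric] of_nat_le_iff .
  with card_verts_powr_le[OF K_pos] show ?thesis by linarith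
qed

end

subsection \<open>A linear-size hierarchical labeling\<close>

definition linear_Lf :: "nat \<Rightarrow> nat set" where
  "linear_Lf x = (if x \<in> sources K then {x, 0}
               else if x \<in> paths K then {5 * path_index x + 1 .. x} else {x})"

definition linear_Lb :: "nat \<Rightarrow> nat set" where
  "linear_Lb x = (if x \<in> paths K then {x, 0} else {x})"

lemma linear_labels_le: "v \<in> linear_Lf x \<union> linear_Lb x \<Longrightarrow> v \<le> x"
  by (auto simp: linear_Lf_def linear_Lb_def split: if_splits)

lemma linear_labels_cover:
  assumes u: "u \<in> verts K" and r: "reach (arcs K) u w"
  shows "covers (arcs K) linear_Lf linear_Lb u w"
proof -
  have rr: "(u, w) \<in> (arcs K)\<^sup>*" using r by (simp add: reach_def)
  consider "u = 0" | "u \<in> paths K" | "u \<in> sources K" "w = u" | "u \<in> sources K" "w \<noteq> u"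
    using verts_cases[OF u] by blast
  then show ?thesis
  proof cases
    case 1
    then have "0 \<in> linear_Lf u \<inter> linear_Lb w"
      using zero_not_path source_not_path reach_cases[OF rr] by (auto simp: linear_Lf_def linear_Lb_def)
    with 1 show ?thesis using on_sp_source[OF r] by (auto simp: covers_def)
  next
    case 2
    then have "w \<in> paths K" "path_index w = path_index u" "w \<le> u"
      using reach_from_path[OF rr] by auto
    moreover have "5 * path_index w + 1 \<le> w"
      using \<open>w \<in> paths K\<close> by (auto simp: path_index_def paths_def)
    ultimately have "w \<in> linear_Lf u \<inter> linear_Lb w"
      using 2 source_not_path by (auto simp: linear_Lf_def linear_Lb_def)
    then show ?thesis using on_sp_target[OF r] by (auto simp: covers_def)
  next
    case 3
    then have "u \<in> linear_Lf u \<inter> linear_Lb w" using source_not_path by (auto simp: linear_Lf_def linear_Lb_def)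
    then show ?thesis using on_sp_source[OF r] 3 by (auto simp: covers_def)
  next
    case 4
    then have w: "w = 0 \<or> w \<in> paths K" using reach_cases[OF rr] by blast
    then have "0 \<in> linear_Lf u \<inter> linear_Lb w"
      using 4 zero_not_path by (auto simp: linear_Lf_def linear_Lb_def)
    moreover have "on_sp (arcs K) u 0 w"
    proof (cases "w = 0")
      case True
      then show ?thesis using on_sp_target[OF r] by simp
    next
      case False
      with w have wP: "w \<in> paths K" by simp
      have "(u, 0) \<in> arcs K" "(0, w) \<in> arcs K"
        using 4 wP by (auto simp: arcs_iff)
      moreover have "gdist (arcs K) u 0 = 1" "gdist (arcs K) 0 w = 1"
        using gdist_arc calculation source_not_path[OF 4(1)] False by metis+
      ultimately show ?thesis
        using gdist_source_path[OF 4(1) wP] by (auto simp: on_sp_def reach_def)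
    qed
    ultimately show ?thesis by (auto simp: covers_def)
  qed
qed

lemma linear_labels_HHL: "is_HHL (verts K) (arcs K) linear_Lf linear_Lb"
proof -
  have "bij_betw Suc (verts K) {1..card (verts K)}"
    by (simp add: verts_def bij_betw_def image_Suc_atLeastAtMost)
  then have "is_hierarchical (verts K) linear_Lf linear_Lb"
    unfolding is_hierarchical_def using linear_labels_le by fastforce
  moreover have "linear_Lf v \<subseteq> verts K \<and> linear_Lb v \<subseteq> verts K" if "v \<in> verts K" for v
    using that linear_labels_le by (fastforce simp: verts_def)
  ultimately show ?thesis
    unfolding is_HHL_def is_hub_labeling_def using linear_labels_cover by blast
qed

lemma linear_labels_size: "hl_size (verts K) linear_Lf linear_Lb \<le> 7 * card (verts K)"
proof -
  have Lf: "card (linear_Lf v) \<le> 5" for v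
  proof -
    have "v + 1 - (5 * path_index v + 1) \<le> 5" if "v \<in> paths K"
      using that by (auto simp: path_index_def paths_def)
    then show ?thesis by (auto simp: linear_Lf_def card_insert_if)
  qed
  have Lb: "card (linear_Lb v) \<le> 2" for v
    by (auto simp: linear_Lb_def card_insert_if)
  have "hl_size (verts K) linear_Lf linear_Lb \<le> (\<Sum>v\<in>verts K. 5 + 2)"
    unfolding hl_size_def by (intro sum_mono add_mono Lf Lb)
  then show ?thesis by simp
qed

end

theorem mainTheorem8:
  shows "\<exists>(G :: nat \<Rightarrow> nat set \<times> (nat \<times> nat) set).
    (\<forall>k. finite (fst (G k)) \<and> fst (G k) \<noteq> {} \<and> snd (G k) \<subseteq> fst (G k) \<times> fst (G k)) \<and>
    strict_mono (\<lambda>k. card (fst (G k))) \<and>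
    (\<exists>c > 0. \<forall>\<^sub>F k in sequentially. \<forall>vs.
        dHHL_run (fst (G k)) (snd (G k)) vs \<longrightarrow>
        real (hl_size (fst (G k)) (fst (labels_after (fst (G k)) (snd (G k)) vs))
                                  (snd (labels_after (fst (G k)) (snd (G k)) vs)))
          \<ge> c * real (card (fst (G k))) powr (3/2)) \<and>
    (\<exists>C. \<forall>\<^sub>F k in sequentially. \<exists>Lf Lb.
        is_HHL (fst (G k)) (snd (G k)) Lf Lb \<and>
        real (hl_size (fst (G k)) Lf Lb) \<le> C * real (card (fst (G k))))"
proof -
  let ?V = "\<lambda>k. verts (Suc k)" and ?E = "\<lambda>k. arcs (Suc k)"
  have family: "path_family (Suc k)" for k
    by unfold_locales simp
  have greedy: "1/27 * real (card (?V k)) powr (3/2)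
      \<le> real (hl_size (?V k) (fst (labels_after (?V k) (?E k) vs)) (snd (labels_after (?V k) (?E k) vs)))"
    if "dHHL_run (?V k) (?E k) vs" for k vs
    using path_family.run_size_ge_powr[OF family that] .
  have linear_hhl: "is_HHL (?V k) (?E k) (path_family.linear_Lf (Suc k)) (path_family.linear_Lb (Suc k))
      \<and> real (hl_size (?V k) (path_family.linear_Lf (Suc k)) (path_family.linear_Lb (Suc k)))
          \<le> 7 * real (card (?V k))" for k
    using path_family.linear_labels_HHL[OF family] path_family.linear_labels_size[OF family]
    by (metis of_nat_le_iff of_nat_mult of_nat_numeral)
  have graph: "finite (?V k) \<and> ?V k \<noteq> {} \<and> ?E k \<subseteq> ?V k \<times> ?V k" for k
    using arcs_subset_verts[of "Suc k"] by (simp add: verts_def)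
  have growing: "strict_mono (\<lambda>k. card (?V k))"
    by (simp add: strict_mono_Suc_iff card_verts)
  show ?thesis
    apply (intro exI[of _ "\<lambda>k. (?V k, ?E k)"] conjI)
    subgoal using graph by simp
    subgoal using growing by simp
    subgoal using greedy by (intro exI[of _ "1/27"] conjI always_eventually allI impI) auto
    subgoal using linear_hhl by (intro exI[of _ 7] always_eventually allI) auto
    done
qed

end
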